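(* Consider the queueing system in the context under MaxWeight with a diagonal matrix $\Delta$ with positive diagonal entries, in overload ($\rho\notin\mathcal{P}$). Let $H=\limsup_{t\to\infty}\langle \frac{X(t)}{t},\Delta\frac{X(t)}{t}\rangle$ and let $\eta$ be the limit of $X(t_c)/t_c$ along an increasing unbounded sequence $\{t_c\}$ with $\langle\eta,\Delta\eta\rangle=H$. Then for any increasing unbounded sequence $\{t_m\}$ with $\lim_{m\to\infty}X(t_m)/t_m=\mu$, $$\langle\mu,\Delta\eta\rangle\ge\langle\rho,\Delta\eta\rangle-\max_{S\in\mathcal{S}}\langle S,\Delta\eta\rangle.$$
   Context: Model: $Q$ queues, finite set $\mathcal{S}=\{S_1,\dots,S_N\}\subset\mathbb{R}^Q_{\ge0}$, discrete time. Arrivals $A(t)$ with $0\le A_q(t)\le\bar A_q<\infty$ and $\rho_q=\lim_{t\to\infty}\frac1t\sum_{s=0}^{t-1}A_q(s)\in(0,\infty)$. Departures $D_q(t)=\min\{S_q(t),X_q(t)\}$, $X(t+1)=X(t)+A(t)-D(t)$, $X(0)=0$, with $S(t)\in\arg\max_{S\in\mathcal{S}}\langle S,\Delta X(t)\rangle$. Stability region $\mathcal{P}=\{r\in\mathbb{R}^Q_{\ge0}: r\le\sum_n\alpha_nS_n\text{ for some }\alpha_n\ge0,\sum_n\alpha_n=1\}$. *)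

theory Defs
  imports "HOL-Analysis.Analysis" "HOL-Library.Liminf_Limsup"
begin

definition stab_region :: "(real^'q) set \<Rightarrow> (real^'q) set" where
  "stab_region Sch = {r. (\<forall>q. 0 \<le> r $ q) \<and>
     (\<exists>\<alpha>. (\<forall>s\<in>Sch. 0 \<le> \<alpha> s) \<and> sum \<alpha> Sch = 1 \<and>
          (\<forall>q. r $ q \<le> (\<Sum>s\<in>Sch. \<alpha> s *\<^sub>R s) $ q))}"

end

theory Submission
  imports Defs
begin

text \<open>The bound holds for every componentwise nonnegative weight vector \<open>v\<close>, not only
  for \<open>v = \<Delta> \<eta>\<close>: each slot serves at most what the selected schedule offers, so the weighted
  backlog \<open>X t \<bullet> v\<close> is at least the weighted arrivals minus \<open>t\<close> times the best weighted service
  rate \<open>max\<^sub>S S \<bullet> v\<close>. Dividing by \<open>t\<close> and passing to the limit along \<open>t\<^sub>m\<close> gives the claim;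
  \<open>\<Delta> \<eta>\<close> is nonnegative because \<open>\<Delta>\<close> is a positive diagonal matrix and \<open>\<eta>\<close> is a limit of
  nonnegative queue lengths. Only \<open>Sel t \<in> Sch\<close> is used: neither the optimality of the
  MaxWeight choice, nor overload, nor the maximality of \<open>H\<close> at \<open>\<eta>\<close> enters this bound.\<close>

lemma queue_nonneg:
  fixes X A S :: "nat \<Rightarrow> real^'n"
  assumes "\<forall>q. 0 \<le> X 0 $ q"
    and "\<forall>t q. 0 \<le> A t $ q"
    and "\<forall>t. X (Suc t) = X t + A t - (\<chi> q. min (S t $ q) (X t $ q))"
  shows "0 \<le> X t $ q"
proof (induction t arbitrary: q)
  case 0
  then show ?case using assms(1) by simp
next
  case (Suc t)
  have "X (Suc t) $ q = X t $ q + A t $ q - min (S t $ q) (X t $ q)"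
    using assms(3) by simp
  moreover have "0 \<le> A t $ q" using assms(2) by blast
  moreover have "min (S t $ q) (X t $ q) \<le> X t $ q" by simp
  ultimately show ?case by linarith
qed

lemma nonneg_limit_nth:
  fixes f :: "nat \<Rightarrow> real^'n"
  assumes "f \<longlonglongrightarrow> l" and "\<And>n. 0 \<le> f n $ q"
  shows "0 \<le> l $ q"
  using assms by (intro Lim_component_ge_cart) auto

lemma diagonal_matrix_vector_mult_nth:
  fixes D :: "'a::comm_ring_1^'n^'n"
  assumes "\<forall>i j. i \<noteq> j \<longrightarrow> D $ i $ j = 0"
  shows "(D *v x) $ i = D $ i $ i * x $ i"
proof -
  have "(D *v x) $ i = (\<Sum>j\<in>UNIV. D $ i $ j * x $ j)"
    by (simp add: matrix_vector_mult_def)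
  also have "\<dots> = (\<Sum>j\<in>UNIV. if j = i then D $ i $ i * x $ i else 0)"
    by (rule sum.cong) (use assms in auto)
  finally show ?thesis by simp
qed

lemma inner_min_le_inner:
  fixes s x v :: "real^'n"
  assumes "\<forall>q. 0 \<le> v $ q"
  shows "(\<chi> q. min (s $ q) (x $ q)) \<bullet> v \<le> s \<bullet> v"
  unfolding inner_vec_def using assms by (intro sum_mono) (simp add: mult_right_mono)

lemma weighted_backlog_lower_bound:
  fixes X A D :: "nat \<Rightarrow> 'a::real_inner"
  assumes "\<forall>t. X (Suc t) = X t + A t - D t"
    and "\<forall>t. D t \<bullet> v \<le> c"
  shows "X 0 \<bullet> v + (\<Sum>s<t. A s \<bullet> v) - real t * c \<le> X t \<bullet> v"
proof (induction t)
  case 0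
  then show ?case by simp
next
  case (Suc t)
  have "X (Suc t) \<bullet> v = X t \<bullet> v + A t \<bullet> v - D t \<bullet> v"
    using assms(1) by (simp add: inner_diff_left inner_add_left)
  then show ?case using Suc assms(2)[rule_format, of t] by (simp add: algebra_simps)
qed

lemma weighted_arrival_rate:
  fixes A :: "nat \<Rightarrow> real^'n"
  assumes "\<forall>q. (\<lambda>t. (\<Sum>s<t. A s $ q) / real t) \<longlonglongrightarrow> \<rho> $ q"
  shows "(\<lambda>t. (\<Sum>s<t. A s \<bullet> v) / real t) \<longlonglongrightarrow> \<rho> \<bullet> v"
proof -
  have "(\<lambda>t. inverse (real t) *\<^sub>R (\<Sum>s<t. A s)) \<longlonglongrightarrow> \<rho>"
    using assms by (intro vec_tendstoI) (simp add: sum_component divide_inverse mult.commute)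
  then have "(\<lambda>t. (inverse (real t) *\<^sub>R (\<Sum>s<t. A s)) \<bullet> v) \<longlonglongrightarrow> \<rho> \<bullet> v"
    by (intro tendsto_intros)
  then show ?thesis
    by (simp add: inner_sum_left divide_inverse mult.commute)
qed

lemma limit_of_linear_lower_bound:
  fixes a b :: "nat \<Rightarrow> real"
  assumes "\<And>t. a t - real t * c \<le> b t"
    and "(\<lambda>t. a t / real t) \<longlonglongrightarrow> L"
    and "strict_mono r"
    and "(\<lambda>m. b (r m) / real (r m)) \<longlonglongrightarrow> B"
  shows "L - c \<le> B"
proof (rule tendsto_le[OF trivial_limit_sequentially assms(4)])
  show "(\<lambda>m. a (r m) / real (r m) - c) \<longlonglongrightarrow> L - c"
    using LIMSEQ_subseq_LIMSEQ[OF assms(2,3)] by (auto intro!: tendsto_intros simp: o_def)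
  show "\<forall>\<^sub>F m in sequentially. a (r m) / real (r m) - c \<le> b (r m) / real (r m)"
  proof (rule eventually_sequentiallyI[of 1])
    fix m :: nat
    assume "1 \<le> m"
    then have "0 < real (r m)"
      using seq_suble[OF assms(3), of m] by simp
    then have "a (r m) / real (r m) - c = (a (r m) - real (r m) * c) / real (r m)"
      by (simp add: diff_divide_distrib)
    also have "\<dots> \<le> b (r m) / real (r m)"
      using assms(1) \<open>0 < real (r m)\<close> by (simp add: divide_right_mono)
    finally show "a (r m) / real (r m) - c \<le> b (r m) / real (r m)" .
  qed
qed

theorem lemma4:
  fixes Sch :: "(real^'q) set"
    and \<Delta> :: "real^'q^'q"
    and A X Sel :: "nat \<Rightarrow> real^'q"
    and Abar \<rho> \<eta> \<mu> :: "real^'q"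
    and tc tm :: "nat \<Rightarrow> nat"
  assumes Sch_fin: "finite Sch"
    and Sch_nonneg: "\<forall>s\<in>Sch. \<forall>q. 0 \<le> s $ q"
    and Delta_diag: "\<forall>i j. i \<noteq> j \<longrightarrow> \<Delta> $ i $ j = 0"
    and Delta_pos: "\<forall>i. 0 < \<Delta> $ i $ i"
    and A_bdd: "\<forall>t q. 0 \<le> A t $ q \<and> A t $ q \<le> Abar $ q"
    and rho_lim: "\<forall>q. (\<lambda>t. (\<Sum>s<t. A s $ q) / real t) \<longlonglongrightarrow> \<rho> $ q"
    and rho_pos: "\<forall>q. 0 < \<rho> $ q"
    and X0: "X 0 = 0"
    and X_step: "\<forall>t. X (Suc t) = X t + A t - (\<chi> q. min (Sel t $ q) (X t $ q))"
    and maxweight: "\<forall>t. Sel t \<in> Sch \<and> (\<forall>s\<in>Sch. s \<bullet> (\<Delta> *v X t) \<le> Sel t \<bullet> (\<Delta> *v X t))"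
    and overload: "\<rho> \<notin> stab_region Sch"
    and tc_mono: "strict_mono tc"
    and tc_lim: "(\<lambda>c. inverse (real (tc c)) *\<^sub>R X (tc c)) \<longlonglongrightarrow> \<eta>"
    and eta_H: "ereal (\<eta> \<bullet> (\<Delta> *v \<eta>)) =
       limsup (\<lambda>t. ereal ((inverse (real t) *\<^sub>R X t) \<bullet> (\<Delta> *v (inverse (real t) *\<^sub>R X t))))"
    and tm_mono: "strict_mono tm"
    and tm_lim: "(\<lambda>m. inverse (real (tm m)) *\<^sub>R X (tm m)) \<longlonglongrightarrow> \<mu>"
  shows "\<mu> \<bullet> (\<Delta> *v \<eta>) \<ge> \<rho> \<bullet> (\<Delta> *v \<eta>) - Max ((\<lambda>s. s \<bullet> (\<Delta> *v \<eta>)) ` Sch)"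
proof -
  define v where "v = \<Delta> *v \<eta>"
  define M where "M = Max ((\<lambda>s. s \<bullet> v) ` Sch)"
  have X_nonneg: "0 \<le> X t $ q" for t q
    using X0 A_bdd X_step by (intro queue_nonneg) auto
  have "0 \<le> \<eta> $ q" for q
    using tc_lim by (rule nonneg_limit_nth) (simp add: X_nonneg)
  then have v_nonneg: "\<forall>q. 0 \<le> v $ q"
    using Delta_pos unfolding v_def
    by (simp add: diagonal_matrix_vector_mult_nth[OF Delta_diag] less_imp_le)
  have "Sel t \<bullet> v \<le> M" for t
    unfolding M_def using maxweight Sch_fin by (intro Max_ge) auto
  then have "\<forall>t. (\<chi> q. min (Sel t $ q) (X t $ q)) \<bullet> v \<le> M"
    using inner_min_le_inner[OF v_nonneg] order_trans by blast
  from weighted_backlog_lower_bound[OF X_step this]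
  have backlog_bound: "(\<Sum>s<t. A s \<bullet> v) - real t * M \<le> X t \<bullet> v" for t
    using X0 by simp
  have "(\<lambda>m. X (tm m) \<bullet> v / real (tm m)) \<longlonglongrightarrow> \<mu> \<bullet> v"
    using tendsto_inner[OF tm_lim tendsto_const, of v] by (simp add: divide_inverse mult.commute)
  from limit_of_linear_lower_bound[OF backlog_bound weighted_arrival_rate[OF rho_lim] tm_mono this]
  have "\<rho> \<bullet> v - M \<le> \<mu> \<bullet> v" .
  then show ?thesis unfolding v_def M_def by simp
qed

end
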